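(* Let $\mathcal{M}=(S,A,\Delta,T)$ be a \~pMDP that is isomorphic to its MEC-quotient $\mathcal{M}_{/\mathrm{MEC}}$, with graph $(V,E)$. Then for every graph-preserving valuation $\mathsf{val}$ and every $(s,a)\in S\times A$ with $(s,a)\trianglelefteq (sE\setminus\{(s,a)\})$, we have $\max_\sigma \mathbb{P}^{s}_{\mathcal{M}^\sigma_{\mathsf{val}}}[\Diamond\mathit{fin}]=\max_{\sigma'}\mathbb{P}^{s}_{\mathcal{N}^{\sigma'}_{\mathsf{val}}}[\Diamond\mathit{fin}]$, where $\mathcal{N}=(S,A,\Delta\setminus\{(s,a,s')\in\Delta\mid s'\in S\},T)$ is obtained by removing all transitions of the pair $(s,a)$.
   Context: A \~pMDP is $(S,A,\Delta,T)$ with finite states $S$, actions $A$, targets $T=\{\mathit{fin},\mathit{fail}\}$ (no outgoing transitions), and transitions $\Delta\subseteq(S\setminus T)\times A\times S$. Graph: $V=S\cup((S\setminus T)\times A)$, edge $((s,a),s')$ iff $(s,a,s')\in\Delta$, edge $(s,(s,a))$ iff $(s,a,s')\in\Delta$ for some $s'\ne\mathit{fail}$; $vE$ is the successor set. A graph-preserving valuation $\mathsf{val}$ assigns to each state-action pair a full-support probability distribution on its $\Delta$-successors. A strategy and $\mathsf{val}$ induce a Markov chain $\mathcal{M}^\sigma_{\mathsf{val}}$; $\mathbb{P}^s[\Diamond\mathit{fin}]$ is the probability of reaching $\mathit{fin}$ from $s$. Values: $\mathrm{Rew}^*_{\mathsf{val}}(s)=\max_\sigma\mathbb{P}^s[\Diamond\mathit{fin}]$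 for states, and for $(s,a)$, $\mathrm{Rew}^*_{\mathsf{val}}((s,a))=\sum_{s'}\mathsf{val}_{(s,a)}(s')\mathrm{Rew}^*_{\mathsf{val}}(s')$. For $v\in V,W\subseteq V$: $v\trianglelefteq W$ iff for every graph-preserving $\mathsf{val}$ some $w\in W$ has $\mathrm{Rew}^*_{\mathsf{val}}(v)\le\mathrm{Rew}^*_{\mathsf{val}}(w)$. A sub-MDP is a pair $(P,B)$ with $P\subseteq S$, $B$ a set of pairs $(p,a)$ with $(p,(p,a))\in E$, such that every $p\in P$ has some $(p,a)\in B$ and every $\Delta$-successor of every $(p,a)\in B$ lies in $P$. An end component is a sub-MDP whose induced subgraph on $P\cup B$ is strongly connected; a MEC is an end component $(P,B)$ such that no other end component $(P',B')$ has $B\subseteq B'$. For $s\in S$, $[s]$ denotes $P$ if $s$ lies in a (unique) MEC $(P,B)$ and $\{s\}$ otherwise. The MEC-quotient is $\mathcal{M}_{/\mathrm{MEC}}=(S',A,\Delta',T')$ with $S'=\{[s]\mid s\in S\}$, $T'=\{[t]\mid t\in T\}$ and $\Delta'=\{([s],a,[s'])\mid (s,a,s')\in\Delta,\ [s]\neq[s']\}$. *)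

theory Defs
  imports Complex_Main
begin

definition pmdp :: "'s set \<Rightarrow> 'a set \<Rightarrow> ('s \<times> 'a \<times> 's) set \<Rightarrow> 's \<Rightarrow> 's \<Rightarrow> bool" where
  "pmdp S A \<Delta> fin fail \<longleftrightarrow> finite S \<and> finite A \<and> fin \<in> S \<and> fail \<in> S \<and> fin \<noteq> fail \<and>
     \<Delta> \<subseteq> (S - {fin, fail}) \<times> A \<times> S"

definition succs :: "('s \<times> 'a \<times> 's) set \<Rightarrow> 's \<Rightarrow> 'a \<Rightarrow> 's set" where
  "succs \<Delta> s a = {s'. (s, a, s') \<in> \<Delta>}"

definition enabled :: "('s \<times> 'a \<times> 's) set \<Rightarrow> 's \<Rightarrow> 'a set" where
  "enabled \<Delta> s = {a. \<exists>s'. (s, a, s') \<in> \<Delta>}"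

datatype ('s, 'a) vertex = St 's | SA 's 'a

definition edges :: "('s \<times> 'a \<times> 's) set \<Rightarrow> 's \<Rightarrow> (('s,'a) vertex \<times> ('s,'a) vertex) set" where
  "edges \<Delta> fail =
     {(SA s a, St s') | s a s'. (s, a, s') \<in> \<Delta>} \<union>
     {(St s, SA s a) | s a s'. (s, a, s') \<in> \<Delta> \<and> s' \<noteq> fail}"

definition vsucc :: "('s \<times> 'a \<times> 's) set \<Rightarrow> 's \<Rightarrow> ('s,'a) vertex \<Rightarrow> ('s,'a) vertex set" where
  "vsucc \<Delta> fail v = {w. (v, w) \<in> edges \<Delta> fail}"

definition graph_preserving :: "('s \<times> 'a \<times> 's) set \<Rightarrow> ('s \<Rightarrow> 'a \<Rightarrow> 's \<Rightarrow> real) \<Rightarrow> bool" where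
  "graph_preserving \<Delta> val \<longleftrightarrow>
     (\<forall>s a. succs \<Delta> s a \<noteq> {} \<longrightarrow>
        (\<forall>s'. val s a s' \<ge> 0 \<and> (val s a s' > 0 \<longleftrightarrow> s' \<in> succs \<Delta> s a)) \<and>
        (\<Sum>s'\<in>succs \<Delta> s a. val s a s') = 1)"

text \<open>General (history-dependent, randomised) strategies: a history is a nonempty list of
states; the strategy gives a distribution over the actions enabled in the last state.\<close>

definition strategy :: "('s \<times> 'a \<times> 's) set \<Rightarrow> ('s list \<Rightarrow> 'a \<Rightarrow> real) \<Rightarrow> bool" where
  "strategy \<Delta> \<sigma> \<longleftrightarrow>
     (\<forall>h a. h \<noteq> [] \<longrightarrow> \<sigma> h a \<ge> 0 \<and> (\<sigma> h a \<noteq> 0 \<longrightarrow> a \<in> enabled \<Delta> (last h))) \<and>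
     (\<forall>h. h \<noteq> [] \<longrightarrow> enabled \<Delta> (last h) \<noteq> {} \<longrightarrow> (\<Sum>a\<in>enabled \<Delta> (last h). \<sigma> h a) = 1)"

fun reach_within ::
  "('s \<times> 'a \<times> 's) set \<Rightarrow> ('s \<Rightarrow> 'a \<Rightarrow> 's \<Rightarrow> real) \<Rightarrow> ('s list \<Rightarrow> 'a \<Rightarrow> real) \<Rightarrow> 's
    \<Rightarrow> 's list \<Rightarrow> nat \<Rightarrow> real" where
  "reach_within \<Delta> val \<sigma> fin h 0 = (if last h = fin then 1 else 0)"
| "reach_within \<Delta> val \<sigma> fin h (Suc n) =
     (if last h = fin then 1 else
      (\<Sum>a\<in>enabled \<Delta> (last h). \<sigma> h a *
         (\<Sum>s'\<in>succs \<Delta> (last h) a. val (last h) a s' * reach_within \<Delta> val \<sigma> fin (h @ [s']) n)))"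

text \<open>Probability of eventually reaching fin from s (limit of the increasing sequence of
step-bounded reachability probabilities).\<close>

definition reach_prob ::
  "('s \<times> 'a \<times> 's) set \<Rightarrow> ('s \<Rightarrow> 'a \<Rightarrow> 's \<Rightarrow> real) \<Rightarrow> ('s list \<Rightarrow> 'a \<Rightarrow> real) \<Rightarrow> 's \<Rightarrow> 's \<Rightarrow> real" where
  "reach_prob \<Delta> val \<sigma> fin s = (SUP n. reach_within \<Delta> val \<sigma> fin [s] n)"

definition max_rew :: "('s \<times> 'a \<times> 's) set \<Rightarrow> ('s \<Rightarrow> 'a \<Rightarrow> 's \<Rightarrow> real) \<Rightarrow> 's \<Rightarrow> 's \<Rightarrow> real" where
  "max_rew \<Delta> val fin s = (SUP \<sigma>\<in>{\<sigma>. strategy \<Delta> \<sigma>}. reach_prob \<Delta> val \<sigma> fin s)"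

fun rew_v :: "('s \<times> 'a \<times> 's) set \<Rightarrow> ('s \<Rightarrow> 'a \<Rightarrow> 's \<Rightarrow> real) \<Rightarrow> 's \<Rightarrow> ('s,'a) vertex \<Rightarrow> real" where
  "rew_v \<Delta> val fin (St s) = max_rew \<Delta> val fin s"
| "rew_v \<Delta> val fin (SA s a) = (\<Sum>s'\<in>succs \<Delta> s a. val s a s' * max_rew \<Delta> val fin s')"

definition dominated ::
  "('s \<times> 'a \<times> 's) set \<Rightarrow> 's \<Rightarrow> ('s,'a) vertex \<Rightarrow> ('s,'a) vertex set \<Rightarrow> bool" where
  "dominated \<Delta> fin v W \<longleftrightarrow>
     (\<forall>val. graph_preserving \<Delta> val \<longrightarrow> (\<exists>w\<in>W. rew_v \<Delta> val fin v \<le> rew_v \<Delta> val fin w))"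

definition sub_mdp :: "'s set \<Rightarrow> ('s \<times> 'a \<times> 's) set \<Rightarrow> 's \<Rightarrow> 's set \<Rightarrow> ('s \<times> 'a) set \<Rightarrow> bool" where
  "sub_mdp S \<Delta> fail P B \<longleftrightarrow> P \<subseteq> S \<and>
     (\<forall>(p, a)\<in>B. (St p, SA p a) \<in> edges \<Delta> fail) \<and>
     (\<forall>p\<in>P. \<exists>a. (p, a) \<in> B) \<and>
     (\<forall>(p, a)\<in>B. succs \<Delta> p a \<subseteq> P)"

definition sub_vertices :: "'s set \<Rightarrow> ('s \<times> 'a) set \<Rightarrow> ('s,'a) vertex set" where
  "sub_vertices P B = St ` P \<union> (\<lambda>(p, a). SA p a) ` B"

definition end_component :: "'s set \<Rightarrow> ('s \<times> 'a \<times> 's) set \<Rightarrow> 's \<Rightarrow> 's set \<Rightarrow> ('s \<times> 'a) set \<Rightarrow> bool" where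
  "end_component S \<Delta> fail P B \<longleftrightarrow> sub_mdp S \<Delta> fail P B \<and>
     (\<forall>u\<in>sub_vertices P B. \<forall>v\<in>sub_vertices P B.
        (u, v) \<in> (edges \<Delta> fail \<inter> (sub_vertices P B \<times> sub_vertices P B))\<^sup>*)"

definition mec :: "'s set \<Rightarrow> ('s \<times> 'a \<times> 's) set \<Rightarrow> 's \<Rightarrow> 's set \<Rightarrow> ('s \<times> 'a) set \<Rightarrow> bool" where
  "mec S \<Delta> fail P B \<longleftrightarrow> end_component S \<Delta> fail P B \<and>
     \<not> (\<exists>P' B'. end_component S \<Delta> fail P' B' \<and> (P', B') \<noteq> (P, B) \<and> B \<subseteq> B')"

definition mec_class :: "'s set \<Rightarrow> ('s \<times> 'a \<times> 's) set \<Rightarrow> 's \<Rightarrow> 's \<Rightarrow> 's set" where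
  "mec_class S \<Delta> fail s =
     (if \<exists>P B. mec S \<Delta> fail P B \<and> s \<in> P
      then (THE P. \<exists>B. mec S \<Delta> fail P B \<and> s \<in> P) else {s})"

definition quot_states :: "'s set \<Rightarrow> ('s \<times> 'a \<times> 's) set \<Rightarrow> 's \<Rightarrow> 's set set" where
  "quot_states S \<Delta> fail = mec_class S \<Delta> fail ` S"

definition quot_trans :: "'s set \<Rightarrow> ('s \<times> 'a \<times> 's) set \<Rightarrow> 's \<Rightarrow> ('s set \<times> 'a \<times> 's set) set" where
  "quot_trans S \<Delta> fail =
     {(mec_class S \<Delta> fail s, a, mec_class S \<Delta> fail s') | s a s'.
        (s, a, s') \<in> \<Delta> \<and> mec_class S \<Delta> fail s \<noteq> mec_class S \<Delta> fail s'}"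

definition iso_to_mec_quotient :: "'s set \<Rightarrow> 'a set \<Rightarrow> ('s \<times> 'a \<times> 's) set \<Rightarrow> 's \<Rightarrow> 's \<Rightarrow> bool" where
  "iso_to_mec_quotient S A \<Delta> fin fail \<longleftrightarrow>
     (\<exists>f g. bij_betw f S (quot_states S \<Delta> fail) \<and> bij_betw g A A \<and>
        f fin = mec_class S \<Delta> fail fin \<and> f fail = mec_class S \<Delta> fail fail \<and>
        (\<forall>s\<in>S. \<forall>a\<in>A. \<forall>s'\<in>S. (s, a, s') \<in> \<Delta> \<longleftrightarrow> (f s, g a, f s') \<in> quot_trans S \<Delta> fail))"

end

theory Submission
  imports Defs
begin

(*
  A pMDP isomorphic to its MEC-quotient has no nonempty end component: a MEC with two states
  would be collapsed in the quotient, and a one-state MEC carries a self-loop, which the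
  quotient drops.

  Removing the transitions of (s, a) cannot increase the value, because every strategy of the
  smaller pMDP is a strategy of the original one with the same reachability probabilities.
  Conversely, let v be the optimal value and let pi choose at every state a remaining action
  maximizing the one-step lookahead of v; by the dominance hypothesis this maximum does not drop
  when (s, a) is removed, so v is bounded by the lookahead of pi. If r is the reachability
  probability of the memoryless strategy pi, then d = v - r satisfies
  d x <= sum_y val x (pi x) y * d y wherever d is positive. Hence the states where d attains a
  positive maximum are closed under pi and avoid fin and fail, so they would contain an end
  component. Therefore d <= 0, that is, v <= r.
*)

section \<open>End components\<close>

lemma St_SA_in_edges_iff [simp]:
  "(St p, SA q b) \<in> edges D fail \<longleftrightarrow> p = q \<and> (\<exists>s'. (p, b, s') \<in> D \<and> s' \<noteq> fail)"
  unfolding edges_def by auto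

lemma SA_St_in_edges_iff [simp]: "(SA p b, St q) \<in> edges D fail \<longleftrightarrow> (p, b, q) \<in> D"
  unfolding edges_def by auto

lemma end_component_states_eq_fst:
  assumes "end_component S D fail P B"
  shows "P = fst ` B"
proof
  have sub: "sub_mdp S D fail P B"
    and conn: "\<forall>u\<in>sub_vertices P B. \<forall>v\<in>sub_vertices P B.
      (u, v) \<in> (edges D fail \<inter> sub_vertices P B \<times> sub_vertices P B)\<^sup>*"
    using assms unfolding end_component_def by auto
  show "P \<subseteq> fst ` B"
    using sub unfolding sub_mdp_def by force
  show "fst ` B \<subseteq> P"
  proof
    fix p assume "p \<in> fst ` B"
    then obtain b where pb: "(p, b) \<in> B" by force
    then obtain s' where "(p, b, s') \<in> D" using sub unfolding sub_mdp_def by fastforce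
    then have "s' \<in> P" using sub pb unfolding sub_mdp_def succs_def by blast
    then have "(St s', SA p b) \<in> (edges D fail \<inter> sub_vertices P B \<times> sub_vertices P B)\<^sup>*"
      using conn pb unfolding sub_vertices_def by fastforce
    then obtain u where "(u, SA p b) \<in> edges D fail" "u \<in> sub_vertices P B"
      by (cases rule: rtranclE) auto
    then show "p \<in> P" unfolding sub_vertices_def edges_def by auto
  qed
qed

lemma end_component_Un:
  assumes "end_component S D fail P1 B1" "end_component S D fail P2 B2" "y \<in> P1" "y \<in> P2"
  shows "end_component S D fail (P1 \<union> P2) (B1 \<union> B2)"
proof -
  define V where "V = sub_vertices (P1 \<union> P2) (B1 \<union> B2)"
  have V: "V = sub_vertices P1 B1 \<union> sub_vertices P2 B2"
    unfolding V_def sub_vertices_def by auto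
  have "(u, St y) \<in> (edges D fail \<inter> V \<times> V)\<^sup>* \<and> (St y, u) \<in> (edges D fail \<inter> V \<times> V)\<^sup>*"
    if "u \<in> V" for u
  proof -
    obtain P B where PB: "end_component S D fail P B" "y \<in> P" "u \<in> sub_vertices P B"
      and "sub_vertices P B \<subseteq> V"
    proof (cases "u \<in> sub_vertices P1 B1")
      case True
      then show ?thesis using that[of P1 B1] assms V by blast
    next
      case False
      then show ?thesis using that[of P2 B2] assms V \<open>u \<in> V\<close> by blast
    qed
    then have "(edges D fail \<inter> sub_vertices P B \<times> sub_vertices P B)\<^sup>* \<subseteq> (edges D fail \<inter> V \<times> V)\<^sup>*"
      by (intro rtrancl_mono) blast
    moreover have "St y \<in> sub_vertices P B" using PB(2) unfolding sub_vertices_def by blast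
    ultimately show ?thesis using PB unfolding end_component_def by blast
  qed
  moreover have "sub_mdp S D fail (P1 \<union> P2) (B1 \<union> B2)"
    using assms unfolding end_component_def sub_mdp_def by blast
  ultimately show ?thesis
    unfolding end_component_def V_def[symmetric] by (meson rtrancl_trans)
qed

lemma mec_maximal:
  assumes "mec S D fail P B" "end_component S D fail P' B'" "B \<subseteq> B'"
  shows "P' = P \<and> B' = B"
proof (rule ccontr)
  assume "\<not> (P' = P \<and> B' = B)"
  then show False using assms unfolding mec_def by auto
qed

lemma mec_states_unique:
  assumes "mec S D fail P1 B1" "mec S D fail P2 B2" "y \<in> P1" "y \<in> P2"
  shows "P1 = P2"
proof -
  have "end_component S D fail P1 B1" "end_component S D fail P2 B2"
    using assms(1,2) unfolding mec_def by simp_all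
  then have "end_component S D fail (P1 \<union> P2) (B1 \<union> B2)"
    by (rule end_component_Un) (use assms(3,4) in simp_all)
  then have "P1 \<union> P2 = P1" "P1 \<union> P2 = P2"
    using mec_maximal[OF assms(1)] mec_maximal[OF assms(2)] by (meson Un_upper1 Un_upper2)+
  then show ?thesis by simp
qed

lemma mec_class_eq:
  assumes "mec S D fail P B" "y \<in> P"
  shows "mec_class S D fail y = P"
proof -
  have "(THE P. \<exists>B. mec S D fail P B \<and> y \<in> P) = P"
  proof (rule the_equality)
    show "\<exists>B. mec S D fail P B \<and> y \<in> P" using assms by blast
    show "P' = P" if "\<exists>B. mec S D fail P' B \<and> y \<in> P'" for P'
      using that mec_states_unique[OF _ assms(1) _ assms(2)] by blast
  qed
  moreover have "\<exists>P B. mec S D fail P B \<and> y \<in> P" using assms by blast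
  ultimately show ?thesis unfolding mec_class_def by simp
qed

lemma end_component_subset_mec:
  assumes "finite D" and "end_component S D fail P B"
  shows "\<exists>P' B'. mec S D fail P' B' \<and> P \<subseteq> P' \<and> B \<subseteq> B'"
proof -
  let ?ECs = "{B'. \<exists>P'. end_component S D fail P' B'}"
  have "?ECs \<subseteq> Pow ((\<lambda>(p, b, _). (p, b)) ` D)"
  proof
    fix B' assume "B' \<in> ?ECs"
    then have "\<forall>(p, b)\<in>B'. \<exists>s'. (p, b, s') \<in> D"
      unfolding end_component_def sub_mdp_def by fastforce
    then show "B' \<in> Pow ((\<lambda>(p, b, _). (p, b)) ` D)" by force
  qed
  then have "finite ?ECs" using assms(1) by (simp add: finite_subset)
  then obtain Bm where "Bm \<in> ?ECs" "B \<subseteq> Bm" and max: "\<forall>B'\<in>?ECs. Bm \<subseteq> B' \<longrightarrow> Bm = B'"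
    using finite_has_maximal2[of ?ECs B] assms(2) by blast
  then obtain Pm where Pm: "end_component S D fail Pm Bm" by blast
  have "mec S D fail Pm Bm"
    unfolding mec_def
  proof (intro conjI notI)
    show "end_component S D fail Pm Bm" by (rule Pm)
    assume "\<exists>P' B'. end_component S D fail P' B' \<and> (P', B') \<noteq> (Pm, Bm) \<and> Bm \<subseteq> B'"
    then obtain P' B' where "end_component S D fail P' B'" "(P', B') \<noteq> (Pm, Bm)" "Bm \<subseteq> B'"
      by blast
    moreover from this have "Bm = B'" using max by blast
    ultimately show False using end_component_states_eq_fst Pm by metis
  qed
  moreover have "P \<subseteq> Pm"
    using end_component_states_eq_fst[OF assms(2)] end_component_states_eq_fst[OF Pm] \<open>B \<subseteq> Bm\<close> by blast
  ultimately show ?thesis using \<open>B \<subseteq> Bm\<close> by blast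
qed

lemma inj_on_mec_class_if_iso:
  assumes "finite S" and "iso_to_mec_quotient S A D fin fail"
  shows "inj_on (mec_class S D fail) S"
proof -
  obtain f where "bij_betw f S (mec_class S D fail ` S)"
    using assms(2) unfolding iso_to_mec_quotient_def quot_states_def by blast
  then have "card (mec_class S D fail ` S) = card S" by (simp add: bij_betw_same_card)
  then show ?thesis using assms(1) by (simp add: inj_on_iff_eq_card)
qed

lemma no_self_loop_if_iso:
  assumes "iso_to_mec_quotient S A D fin fail" "y \<in> S" "b \<in> A"
  shows "(y, b, y) \<notin> D"
  using assms unfolding iso_to_mec_quotient_def quot_trans_def by fastforce

lemma no_end_component_if_iso:
  assumes pm: "pmdp S A D fin fail" and iso: "iso_to_mec_quotient S A D fin fail"
    and ec: "end_component S D fail P B"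
  shows "P = {}"
proof (rule ccontr)
  assume "P \<noteq> {}"
  then obtain y where "y \<in> P" by blast
  have D: "finite S" "finite A" "D \<subseteq> S \<times> A \<times> S" using pm unfolding pmdp_def by auto
  then have "finite D" by (meson finite_SigmaI finite_subset)
  obtain Pm Bm where mec: "mec S D fail Pm Bm" and "P \<subseteq> Pm"
    using end_component_subset_mec[OF \<open>finite D\<close> ec] by blast
  with \<open>y \<in> P\<close> have "y \<in> Pm" by blast
  have PmS: "Pm \<subseteq> S" using mec unfolding mec_def end_component_def sub_mdp_def by blast
  have "Pm = {y}"
  proof (intro set_eqI iffI)
    fix z assume "z \<in> Pm"
    then have "mec_class S D fail z = mec_class S D fail y"
      using mec_class_eq[OF mec] \<open>y \<in> Pm\<close> by simp
    then show "z \<in> {y}"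
      using inj_on_mec_class_if_iso[OF D(1) iso] PmS \<open>z \<in> Pm\<close> \<open>y \<in> Pm\<close>
      by (auto dest: inj_onD)
  qed (use \<open>y \<in> Pm\<close> in simp)
  obtain b where "(y, b) \<in> Bm"
    using mec \<open>y \<in> Pm\<close> unfolding mec_def end_component_def sub_mdp_def by blast
  then obtain y' where "(y, b, y') \<in> D" "succs D y b \<subseteq> {y}"
    using mec \<open>Pm = {y}\<close> unfolding mec_def end_component_def sub_mdp_def by fastforce
  then have "(y, b, y) \<in> D" by (auto simp: succs_def)
  then show False using no_self_loop_if_iso[OF iso] D by blast
qed

lemma closed_set_has_strongly_connected_closed_subset:
  assumes "finite X" "X \<noteq> {}" "R `` X \<subseteq> X"
  shows "\<exists>Y\<subseteq>X. Y \<noteq> {} \<and> R `` Y \<subseteq> Y \<and> (\<forall>y\<in>Y. \<forall>z\<in>Y. (y, z) \<in> R\<^sup>*)"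
proof -
  have reach_in_X: "R\<^sup>* `` {x} \<subseteq> X" if "x \<in> X" for x
    using Image_closed_trancl[OF assms(3)] that by blast
  \<comment> \<open>a state with the fewest reachable states lies in a bottom strongly connected component\<close>
  obtain x0 where x0: "x0 \<in> X"
    and least: "\<And>x. x \<in> X \<Longrightarrow> card (R\<^sup>* `` {x0}) \<le> card (R\<^sup>* `` {x})"
    using ex_has_least_nat[of "\<lambda>x. x \<in> X" _ "\<lambda>x. card (R\<^sup>* `` {x})"] assms(2) by blast
  define Y where "Y = R\<^sup>* `` {x0}"
  have "(y, x0) \<in> R\<^sup>*" if "y \<in> Y" for y
  proof -
    have "R\<^sup>* `` {y} \<subseteq> Y" using that unfolding Y_def by (auto dest: rtrancl_trans)
    moreover have "finite Y" using reach_in_X[OF x0] assms(1) finite_subset unfolding Y_def by blast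
    moreover have "card Y \<le> card (R\<^sup>* `` {y})"
      using least reach_in_X[OF x0] that unfolding Y_def by blast
    ultimately have "R\<^sup>* `` {y} = Y" by (simp add: card_seteq)
    then show ?thesis unfolding Y_def by blast
  qed
  then have "\<forall>y\<in>Y. \<forall>z\<in>Y. (y, z) \<in> R\<^sup>*" unfolding Y_def by (auto dest: rtrancl_trans)
  moreover have "R `` Y \<subseteq> Y" unfolding Y_def by (auto dest: rtrancl_into_rtrancl)
  moreover have "x0 \<in> Y" unfolding Y_def by blast
  ultimately show ?thesis using reach_in_X[OF x0] unfolding Y_def by blast
qed

lemma end_component_of_strongly_connected_memoryless:
  fixes \<pi> :: "'s \<Rightarrow> 'a" and D :: "('s \<times> 'a \<times> 's) set"
  defines "R \<equiv> {(y, z). z \<in> succs D y (\<pi> y)}"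
  assumes "Y \<subseteq> S"
    and edge: "\<And>y. y \<in> Y \<Longrightarrow> (St y, SA y (\<pi> y)) \<in> edges D fail"
    and closed: "R `` Y \<subseteq> Y"
    and conn: "\<And>y z. y \<in> Y \<Longrightarrow> z \<in> Y \<Longrightarrow> (y, z) \<in> R\<^sup>*"
  shows "end_component S D fail Y ((\<lambda>y. (y, \<pi> y)) ` Y)"
proof -
  define V where "V = sub_vertices Y ((\<lambda>y. (y, \<pi> y)) ` Y)"
  have V: "V = St ` Y \<union> (\<lambda>y. SA y (\<pi> y)) ` Y" unfolding V_def sub_vertices_def by auto
  let ?E = "edges D fail \<inter> V \<times> V"
  have succ_in_Y: "z \<in> Y" if "y \<in> Y" "(y, \<pi> y, z) \<in> D" for y z
    using closed that unfolding R_def succs_def by blast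
  have "(St y, St z) \<in> ?E\<^sup>*" if "(y, z) \<in> R\<^sup>*" "y \<in> Y" for y z
    using that
  proof (induction rule: rtrancl_induct)
    case (step z z')
    then have "z \<in> Y" "(z, \<pi> z, z') \<in> D"
      using Image_closed_trancl[OF closed] unfolding R_def succs_def by blast+
    then have "(St z, SA z (\<pi> z)) \<in> ?E" "(SA z (\<pi> z), St z') \<in> ?E"
      using edge succ_in_Y unfolding V by auto
    with step.IH show ?case by (meson rtrancl_into_rtrancl step.prems)
  qed simp
  then have St_conn: "(St y, St z) \<in> ?E\<^sup>*" if "y \<in> Y" "z \<in> Y" for y z
    using conn that by blast
  have "\<exists>y\<in>Y. (u, St y) \<in> ?E\<^sup>*" if "u \<in> V" for u
  proof -
    obtain y where y: "y \<in> Y" "u = St y \<or> u = SA y (\<pi> y)" using \<open>u \<in> V\<close> unfolding V by blast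
    obtain z where "(y, \<pi> y, z) \<in> D" using edge[OF y(1)] by auto
    then have "z \<in> Y" "(SA y (\<pi> y), St z) \<in> ?E" using succ_in_Y y(1) unfolding V by auto
    then show ?thesis using y by blast
  qed
  moreover have "\<exists>y\<in>Y. (St y, u) \<in> ?E\<^sup>*" if "u \<in> V" for u
  proof -
    obtain y where y: "y \<in> Y" "u = St y \<or> u = SA y (\<pi> y)" using \<open>u \<in> V\<close> unfolding V by blast
    then have "(St y, SA y (\<pi> y)) \<in> ?E" using edge unfolding V by auto
    then show ?thesis using y by blast
  qed
  ultimately have "(u, v) \<in> ?E\<^sup>*" if "u \<in> V" "v \<in> V" for u v
    using that St_conn by (meson rtrancl_trans)
  moreover have "sub_mdp S D fail Y ((\<lambda>y. (y, \<pi> y)) ` Y)"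
    using \<open>Y \<subseteq> S\<close> edge closed unfolding sub_mdp_def R_def by auto
  ultimately show ?thesis unfolding end_component_def V_def by blast
qed

lemma end_component_of_closed_memoryless:
  fixes \<pi> :: "'s \<Rightarrow> 'a" and D :: "('s \<times> 'a \<times> 's) set"
  assumes "finite X" "X \<noteq> {}" "X \<subseteq> S"
    and "\<And>x. x \<in> X \<Longrightarrow> (St x, SA x (\<pi> x)) \<in> edges D fail"
    and "\<And>x. x \<in> X \<Longrightarrow> succs D x (\<pi> x) \<subseteq> X"
  shows "\<exists>P B. end_component S D fail P B \<and> P \<noteq> {}"
proof -
  let ?R = "{(y, z). z \<in> succs D y (\<pi> y)}"
  have "?R `` X \<subseteq> X" using assms(5) by blast
  from closed_set_has_strongly_connected_closed_subset[OF assms(1,2) this]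
  obtain Y where Y: "Y \<subseteq> X" "Y \<noteq> {}" "?R `` Y \<subseteq> Y" "\<forall>y\<in>Y. \<forall>z\<in>Y. (y, z) \<in> ?R\<^sup>*"
    by blast
  have "end_component S D fail Y ((\<lambda>y. (y, \<pi> y)) ` Y)"
  proof (rule end_component_of_strongly_connected_memoryless)
    show "Y \<subseteq> S" using Y(1) assms(3) by blast
    show "(St y, SA y (\<pi> y)) \<in> edges D fail" if "y \<in> Y" for y
      using that Y(1) assms(4) by blast
  qed (use Y(3,4) in blast)+
  then show ?thesis using \<open>Y \<noteq> {}\<close> by blast
qed

section \<open>Reachability probabilities and optimal values\<close>

lemma enabled_iff_succs_nonempty: "b \<in> enabled D x \<longleftrightarrow> succs D x b \<noteq> {}"
  unfolding enabled_def succs_def by auto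

lemma pmdp_subset: "pmdp S A D fin fail \<Longrightarrow> D' \<subseteq> D \<Longrightarrow> pmdp S A D' fin fail"
  unfolding pmdp_def by blast

lemma pmdp_finite_enabled: "pmdp S A D fin fail \<Longrightarrow> finite (enabled D x)"
  unfolding pmdp_def enabled_def by (auto intro: finite_subset)

lemma pmdp_succs_subset: "pmdp S A D fin fail \<Longrightarrow> succs D x b \<subseteq> S"
  unfolding pmdp_def succs_def by auto

lemma pmdp_enabled_targets: "pmdp S A D fin fail \<Longrightarrow> enabled D fin = {} \<and> enabled D fail = {}"
  unfolding pmdp_def enabled_def by auto

lemma graph_preserving_weights:
  assumes "graph_preserving D val" "b \<in> enabled D x"
  shows "0 \<le> val x b y" "y \<in> succs D x b \<Longrightarrow> 0 < val x b y" "(\<Sum>y\<in>succs D x b. val x b y) = 1"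
  using assms unfolding graph_preserving_def enabled_iff_succs_nonempty by blast+

lemma strategy_weights:
  assumes "strategy D \<sigma>" "h \<noteq> []"
  shows "0 \<le> \<sigma> h b" "(\<Sum>b\<in>enabled D (last h). \<sigma> h b) \<le> 1"
proof -
  show "0 \<le> \<sigma> h b" using assms unfolding strategy_def by blast
  show "(\<Sum>b\<in>enabled D (last h). \<sigma> h b) \<le> 1"
    using assms unfolding strategy_def by (cases "enabled D (last h) = {}") auto
qed

lemma weighted_sum_le:
  fixes p f :: "'b \<Rightarrow> real"
  assumes "\<And>x. x \<in> X \<Longrightarrow> 0 \<le> p x" "sum p X \<le> 1" "\<And>x. x \<in> X \<Longrightarrow> f x \<le> m" "0 \<le> m"
  shows "(\<Sum>x\<in>X. p x * f x) \<le> m"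
proof -
  have "(\<Sum>x\<in>X. p x * f x) \<le> (\<Sum>x\<in>X. p x * m)"
    using assms(1,3) by (intro sum_mono mult_left_mono) auto
  also have "\<dots> = sum p X * m" by (simp add: sum_distrib_right)
  also have "\<dots> \<le> m" using assms(2,4) mult_right_mono[of "sum p X" 1 m] by simp
  finally show ?thesis .
qed

lemma reach_within_bounds:
  assumes \<sigma>: "strategy D \<sigma>" and val: "graph_preserving D val" and "h \<noteq> []"
  shows "0 \<le> reach_within D val \<sigma> fin h n \<and> reach_within D val \<sigma> fin h n \<le> 1"
  using \<open>h \<noteq> []\<close>
proof (induction n arbitrary: h)
  case (Suc n)
  let ?x = "last h"
  let ?F = "\<lambda>b. \<Sum>y\<in>succs D ?x b. val ?x b y * reach_within D val \<sigma> fin (h @ [y]) n"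
  have IH: "0 \<le> reach_within D val \<sigma> fin (h @ [y]) n \<and> reach_within D val \<sigma> fin (h @ [y]) n \<le> 1"
    for y using Suc.IH[of "h @ [y]"] by simp
  have F: "0 \<le> ?F b \<and> ?F b \<le> 1" if "b \<in> enabled D ?x" for b
  proof
    show "0 \<le> ?F b"
      using IH graph_preserving_weights(1)[OF val that] by (intro sum_nonneg mult_nonneg_nonneg) auto
    show "?F b \<le> 1"
      by (rule weighted_sum_le) (use IH graph_preserving_weights(1,3)[OF val that] in auto)
  qed
  have "0 \<le> \<sigma> h b * ?F b" if "b \<in> enabled D ?x" for b
    using F[OF that] strategy_weights(1)[OF \<sigma> Suc.prems] by simp
  then have "0 \<le> (\<Sum>b\<in>enabled D ?x. \<sigma> h b * ?F b)" by (rule sum_nonneg)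
  moreover have "(\<Sum>b\<in>enabled D ?x. \<sigma> h b * ?F b) \<le> 1"
    by (rule weighted_sum_le) (use F strategy_weights[OF \<sigma> Suc.prems] in auto)
  ultimately show ?case by (simp only: reach_within.simps(2)) simp
qed simp

lemma reach_within_Suc_mono:
  assumes \<sigma>: "strategy D \<sigma>" and val: "graph_preserving D val" and "h \<noteq> []"
  shows "reach_within D val \<sigma> fin h n \<le> reach_within D val \<sigma> fin h (Suc n)"
  using \<open>h \<noteq> []\<close>
proof (induction n arbitrary: h)
  case 0
  then show ?case using reach_within_bounds[OF \<sigma> val 0, of fin "Suc 0"] by auto
next
  case (Suc n)
  let ?x = "last h"
  have "(\<Sum>y\<in>succs D ?x b. val ?x b y * reach_within D val \<sigma> fin (h @ [y]) n)
      \<le> (\<Sum>y\<in>succs D ?x b. val ?x b y * reach_within D val \<sigma> fin (h @ [y]) (Suc n))"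
    if "b \<in> enabled D ?x" for b
  proof (rule sum_mono, rule mult_left_mono)
    fix y
    have "h @ [y] \<noteq> []" by simp
    from Suc.IH[OF this]
    show "reach_within D val \<sigma> fin (h @ [y]) n \<le> reach_within D val \<sigma> fin (h @ [y]) (Suc n)" .
  qed (rule graph_preserving_weights(1)[OF val that])
  then have "(\<Sum>b\<in>enabled D ?x. \<sigma> h b *
        (\<Sum>y\<in>succs D ?x b. val ?x b y * reach_within D val \<sigma> fin (h @ [y]) n))
      \<le> (\<Sum>b\<in>enabled D ?x. \<sigma> h b *
        (\<Sum>y\<in>succs D ?x b. val ?x b y * reach_within D val \<sigma> fin (h @ [y]) (Suc n)))"
    using strategy_weights(1)[OF \<sigma> Suc.prems] by (blast intro: sum_mono mult_left_mono)
  then show ?case unfolding reach_within.simps(2)[of _ _ _ _ h] by (simp del: reach_within.simps)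
qed

lemma reach_within_Cons:
  assumes "h \<noteq> []"
  shows "reach_within D val \<sigma> fin (x # h) n = reach_within D val (\<lambda>h. \<sigma> (x # h)) fin h n"
  using assms by (induction n arbitrary: h) simp_all

lemma strategy_Cons:
  assumes "strategy D \<sigma>"
  shows "strategy D (\<lambda>h. \<sigma> (x # h))"
  using assms unfolding strategy_def by (metis last_ConsR list.distinct(1))

lemma reach_within_LIMSEQ_reach_prob:
  assumes "strategy D \<sigma>" "graph_preserving D val"
  shows "(\<lambda>n. reach_within D val \<sigma> fin [x] n) \<longlonglongrightarrow> reach_prob D val \<sigma> fin x"
  unfolding reach_prob_def
proof (rule LIMSEQ_incseq_SUP)
  show "bdd_above (range (\<lambda>n. reach_within D val \<sigma> fin [x] n))"
    using reach_within_bounds[OF assms] by (intro bdd_aboveI[of _ 1]) auto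
  show "incseq (\<lambda>n. reach_within D val \<sigma> fin [x] n)"
    by (intro incseq_SucI reach_within_Suc_mono[OF assms]) simp
qed

lemma reach_prob_bounds:
  assumes "strategy D \<sigma>" "graph_preserving D val"
  shows "reach_within D val \<sigma> fin [x] n \<le> reach_prob D val \<sigma> fin x"
    and "0 \<le> reach_prob D val \<sigma> fin x" "reach_prob D val \<sigma> fin x \<le> 1"
proof -
  have "incseq (\<lambda>n. reach_within D val \<sigma> fin [x] n)"
    by (intro incseq_SucI reach_within_Suc_mono[OF assms]) simp
  then show le: "reach_within D val \<sigma> fin [x] n \<le> reach_prob D val \<sigma> fin x" for n
    using reach_within_LIMSEQ_reach_prob[OF assms] by (rule incseq_le)
  have "0 \<le> reach_within D val \<sigma> fin [x] 0" using reach_within_bounds[OF assms] by blast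
  then show "0 \<le> reach_prob D val \<sigma> fin x" using le[of 0] by linarith
  show "reach_prob D val \<sigma> fin x \<le> 1"
    unfolding reach_prob_def using reach_within_bounds[OF assms] by (intro cSUP_least) auto
qed

lemma reach_prob_fin: "reach_prob D val \<sigma> fin fin = 1"
proof -
  have "reach_within D val \<sigma> fin [fin] n = 1" for n by (cases n) simp_all
  then show ?thesis unfolding reach_prob_def by simp
qed

definition memoryless :: "('s \<times> 'a \<times> 's) set \<Rightarrow> ('s \<Rightarrow> 'a) \<Rightarrow> 's list \<Rightarrow> 'a \<Rightarrow> real" where
  "memoryless D \<pi> h b = of_bool (\<pi> (last h) \<in> enabled D (last h) \<and> b = \<pi> (last h))"

lemma strategy_memoryless:
  assumes "\<And>x. finite (enabled D x)" "\<And>x. enabled D x \<noteq> {} \<Longrightarrow> \<pi> x \<in> enabled D x"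
  shows "strategy D (memoryless D \<pi>)"
  using assms unfolding strategy_def memoryless_def by auto

lemma strategy_exists:
  assumes "\<And>x. finite (enabled D x)"
  shows "\<exists>\<sigma>. strategy D \<sigma>"
proof
  show "strategy D (memoryless D (\<lambda>x. SOME b. b \<in> enabled D x))"
    using assms by (rule strategy_memoryless) (simp add: some_in_eq)
qed

lemma reach_within_memoryless_last:
  assumes "h \<noteq> []"
  shows "reach_within D val (memoryless D \<pi>) fin h n = reach_within D val (memoryless D \<pi>) fin [last h] n"
  using assms
proof (induction n arbitrary: h)
  case (Suc n)
  have "reach_within D val (memoryless D \<pi>) fin (h' @ [y]) n = reach_within D val (memoryless D \<pi>) fin [y] n"
    for h' y using Suc.IH[of "h' @ [y]"] by simp
  moreover have "reach_within D val (memoryless D \<pi>) fin [z, y] n = reach_within D val (memoryless D \<pi>) fin [y] n"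
    for z y using Suc.IH[of "[z, y]"] by simp
  moreover have "memoryless D \<pi> h = memoryless D \<pi> [last h]" unfolding memoryless_def by simp
  ultimately show ?case by simp
qed simp

lemma reach_within_memoryless_Suc:
  assumes "x \<noteq> fin" "\<pi> x \<in> enabled D x" "finite (enabled D x)"
  shows "reach_within D val (memoryless D \<pi>) fin [x] (Suc n) =
    (\<Sum>y\<in>succs D x (\<pi> x). val x (\<pi> x) y * reach_within D val (memoryless D \<pi>) fin [y] n)"
proof -
  have "reach_within D val (memoryless D \<pi>) fin [x, y] n = reach_within D val (memoryless D \<pi>) fin [y] n"
    for y using reach_within_memoryless_last[of "[x, y]"] by simp
  then show ?thesis using assms by (simp add: memoryless_def)
qed

lemma reach_prob_memoryless_eq:
  assumes \<sigma>: "strategy D (memoryless D \<pi>)" and val: "graph_preserving D val"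
    and "x \<noteq> fin" "\<pi> x \<in> enabled D x" "finite (enabled D x)"
  shows "reach_prob D val (memoryless D \<pi>) fin x =
    (\<Sum>y\<in>succs D x (\<pi> x). val x (\<pi> x) y * reach_prob D val (memoryless D \<pi>) fin y)"
proof (rule LIMSEQ_unique)
  show "(\<lambda>n. reach_within D val (memoryless D \<pi>) fin [x] (Suc n)) \<longlonglongrightarrow> reach_prob D val (memoryless D \<pi>) fin x"
    using reach_within_LIMSEQ_reach_prob[OF \<sigma> val] by (rule LIMSEQ_Suc)
  show "(\<lambda>n. reach_within D val (memoryless D \<pi>) fin [x] (Suc n)) \<longlonglongrightarrow>
      (\<Sum>y\<in>succs D x (\<pi> x). val x (\<pi> x) y * reach_prob D val (memoryless D \<pi>) fin y)"
    unfolding reach_within_memoryless_Suc[where x = x and fin = fin and \<pi> = \<pi> and D = D, OF assms(3-5)]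
    by (intro tendsto_sum tendsto_mult_left reach_within_LIMSEQ_reach_prob[OF \<sigma> val])
qed

lemma reach_prob_le_max_rew:
  assumes "strategy D \<sigma>" "graph_preserving D val"
  shows "reach_prob D val \<sigma> fin x \<le> max_rew D val fin x"
  unfolding max_rew_def
proof (rule cSUP_upper)
  show "bdd_above ((\<lambda>\<sigma>. reach_prob D val \<sigma> fin x) ` {\<sigma>. strategy D \<sigma>})"
    using reach_prob_bounds(3)[OF _ assms(2)] by (intro bdd_aboveI[of _ 1]) auto
qed (use assms(1) in simp)

lemma max_rew_nonneg:
  assumes "\<And>x. finite (enabled D x)" "graph_preserving D val"
  shows "0 \<le> max_rew D val fin x"
proof -
  obtain \<sigma> where "strategy D \<sigma>" using strategy_exists[OF assms(1)] by blast
  then show ?thesis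
    using reach_prob_bounds(2) reach_prob_le_max_rew assms(2) by (meson order_trans)
qed

lemma max_rew_le_if_actions_le:
  assumes fin_en: "\<And>y. finite (enabled D y)" and val: "graph_preserving D val"
    and "x \<noteq> fin" "0 \<le> m" and act: "\<And>b. b \<in> enabled D x \<Longrightarrow> rew_v D val fin (SA x b) \<le> m"
  shows "max_rew D val fin x \<le> m"
proof -
  have "reach_within D val \<sigma> fin [x] n \<le> m" if \<sigma>: "strategy D \<sigma>" for \<sigma> n
  proof (cases n)
    case (Suc k)
    have inner: "(\<Sum>y\<in>succs D x b. val x b y * reach_within D val \<sigma> fin [x, y] k) \<le> m"
      if b: "b \<in> enabled D x" for b
    proof -
      have "reach_within D val \<sigma> fin [x, y] k \<le> max_rew D val fin y" for y
      proof -
        have "reach_within D val \<sigma> fin [x, y] k = reach_within D val (\<lambda>h. \<sigma> (x # h)) fin [y] k"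
          using reach_within_Cons[of "[y]"] by simp
        also have "\<dots> \<le> max_rew D val fin y"
          using reach_prob_bounds(1) reach_prob_le_max_rew strategy_Cons[OF \<sigma>] val
          by (meson order_trans)
        finally show ?thesis .
      qed
      then have "(\<Sum>y\<in>succs D x b. val x b y * reach_within D val \<sigma> fin [x, y] k)
          \<le> rew_v D val fin (SA x b)"
        using graph_preserving_weights(1)[OF val b] by (simp add: sum_mono mult_left_mono)
      then show ?thesis using act[OF b] by simp
    qed
    have "(\<Sum>b\<in>enabled D x. \<sigma> [x] b *
        (\<Sum>y\<in>succs D x b. val x b y * reach_within D val \<sigma> fin [x, y] k)) \<le> m"
      by (rule weighted_sum_le) (use inner \<open>0 \<le> m\<close> strategy_weights[OF \<sigma>, of "[x]"] in auto)
    then show ?thesis using Suc \<open>x \<noteq> fin\<close> by simp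
  qed (use \<open>x \<noteq> fin\<close> \<open>0 \<le> m\<close> in simp)
  then have "reach_prob D val \<sigma> fin x \<le> m" if "strategy D \<sigma>" for \<sigma>
    unfolding reach_prob_def using that by (intro cSUP_least) auto
  then show ?thesis
    unfolding max_rew_def using strategy_exists[OF fin_en] by (intro cSUP_least) auto
qed

lemma max_rew_le_one:
  assumes "\<And>x. finite (enabled D x)" "graph_preserving D val"
  shows "max_rew D val fin x \<le> 1"
  unfolding max_rew_def using strategy_exists[OF assms(1)] reach_prob_bounds(3)[OF _ assms(2)]
  by (intro cSUP_least) auto

section \<open>Optimality of a memoryless strategy without end components\<close>

lemma subaverage_has_closed_positive_set:
  fixes d :: "'s \<Rightarrow> real"
  assumes "finite S" "x0 \<in> S" "0 < d x0"
    and avg: "\<And>x. x \<in> S \<Longrightarrow> 0 < d x \<Longrightarrow>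
      T x \<subseteq> S \<and> (\<forall>y\<in>T x. 0 < p x y) \<and> sum (p x) (T x) = 1 \<and> d x \<le> (\<Sum>y\<in>T x. p x y * d y)"
  shows "\<exists>X\<subseteq>S. X \<noteq> {} \<and> (\<forall>x\<in>X. 0 < d x \<and> T x \<subseteq> X)"
proof -
  define M where "M = Max (d ` S)"
  define X where "X = {x \<in> S. d x = M}"
  have le_M: "d x \<le> M" if "x \<in> S" for x using assms(1) that unfolding M_def by simp
  have "M \<in> d ` S" using assms(1,2) unfolding M_def by (intro Max_in) auto
  then have "X \<noteq> {}" unfolding X_def by force
  have "0 < M" using le_M[OF assms(2)] assms(3) by simp
  have "T x \<subseteq> X" if "x \<in> X" for x
  proof
    fix y assume "y \<in> T x"
    from that have "x \<in> S" "d x = M" unfolding X_def by auto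
    with \<open>0 < M\<close> avg have T: "T x \<subseteq> S" "\<forall>y\<in>T x. 0 < p x y" "sum (p x) (T x) = 1"
      and M_le: "M \<le> (\<Sum>y\<in>T x. p x y * d y)" by auto
    show "y \<in> X"
    proof (rule ccontr)
      assume "y \<notin> X"
      then have "d y < M" using le_M T(1) \<open>y \<in> T x\<close> unfolding X_def by fastforce
      have "(\<Sum>z\<in>T x. p x z * d z) < (\<Sum>z\<in>T x. p x z * M)"
      proof (rule sum_strict_mono_ex1)
        show "finite (T x)" using T(1) assms(1) by (rule finite_subset)
        show "\<forall>z\<in>T x. p x z * d z \<le> p x z * M"
          using T(1,2) le_M by (auto intro: mult_left_mono less_imp_le)
        show "\<exists>z\<in>T x. p x z * d z < p x z * M"
          using \<open>y \<in> T x\<close> \<open>d y < M\<close> T(2) by auto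
      qed
      also have "\<dots> = M" using T(3) by (simp add: sum_distrib_right[symmetric])
      finally show False using M_le by simp
    qed
  qed
  moreover have "X \<subseteq> S" "\<forall>x\<in>X. 0 < d x" unfolding X_def using \<open>0 < M\<close> by auto
  ultimately show ?thesis using \<open>X \<noteq> {}\<close> by blast
qed

lemma le_reach_prob_memoryless:
  assumes pm: "pmdp S A D fin fail" and no_ec: "\<And>P B. end_component S D fail P B \<Longrightarrow> P = {}"
    and val: "graph_preserving D val"
    and v_fin: "v fin \<le> 1"
    and v_dead: "\<And>y. y \<noteq> fin \<Longrightarrow> enabled D y = {} \<Longrightarrow> v y \<le> 0"
    and v_step: "\<And>y. y \<noteq> fin \<Longrightarrow> enabled D y \<noteq> {} \<Longrightarrow>
      \<pi> y \<in> enabled D y \<and> v y \<le> (\<Sum>z\<in>succs D y (\<pi> y). val y (\<pi> y) z * v z)"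
    and "x \<in> S"
  shows "v x \<le> reach_prob D val (memoryless D \<pi>) fin x"
proof (rule ccontr)
  let ?r = "reach_prob D val (memoryless D \<pi>) fin"
  define d where "d y = v y - ?r y" for y
  assume "\<not> v x \<le> ?r x"
  then have "0 < d x" unfolding d_def by simp
  have fin_en: "finite (enabled D y)" for y using pm by (rule pmdp_finite_enabled)
  have "\<pi> y \<in> enabled D y" if "enabled D y \<noteq> {}" for y
    using that v_step pmdp_enabled_targets[OF pm] by (cases "y = fin") auto
  with fin_en have \<sigma>: "strategy D (memoryless D \<pi>)" by (rule strategy_memoryless)
  have live: "y \<noteq> fin \<and> enabled D y \<noteq> {}" if "0 < d y" for y
  proof
    show "y \<noteq> fin" using that v_fin reach_prob_fin[of D val "memoryless D \<pi>" fin] unfolding d_def by auto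
    show "enabled D y \<noteq> {}"
    proof
      assume "enabled D y = {}"
      with \<open>y \<noteq> fin\<close> have "v y \<le> 0" by (rule v_dead)
      then show False using that reach_prob_bounds(2)[OF \<sigma> val, of fin y] unfolding d_def by simp
    qed
  qed
  have "\<exists>X\<subseteq>S. X \<noteq> {} \<and> (\<forall>y\<in>X. 0 < d y \<and> succs D y (\<pi> y) \<subseteq> X)"
  proof (rule subaverage_has_closed_positive_set)
    show "finite S" using pm unfolding pmdp_def by simp
    show "x \<in> S" "0 < d x" by fact+
    fix y assume "y \<in> S" "0 < d y"
    then have y: "y \<noteq> fin" "\<pi> y \<in> enabled D y"
      and v_y: "v y \<le> (\<Sum>z\<in>succs D y (\<pi> y). val y (\<pi> y) z * v z)"
      using live v_step by blast+
    have "d y \<le> (\<Sum>z\<in>succs D y (\<pi> y). val y (\<pi> y) z * v z) - (\<Sum>z\<in>succs D y (\<pi> y). val y (\<pi> y) z * ?r z)"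
      using v_y reach_prob_memoryless_eq[OF \<sigma> val y fin_en] unfolding d_def by simp
    also have "\<dots> = (\<Sum>z\<in>succs D y (\<pi> y). val y (\<pi> y) z * d z)"
      unfolding d_def by (simp add: sum_subtractf right_diff_distrib)
    finally show "succs D y (\<pi> y) \<subseteq> S \<and> (\<forall>z\<in>succs D y (\<pi> y). 0 < val y (\<pi> y) z) \<and>
        sum (val y (\<pi> y)) (succs D y (\<pi> y)) = 1 \<and> d y \<le> (\<Sum>z\<in>succs D y (\<pi> y). val y (\<pi> y) z * d z)"
      using pmdp_succs_subset[OF pm] graph_preserving_weights(2,3)[OF val y(2)] by blast
  qed
  then obtain X where X: "X \<subseteq> S" "X \<noteq> {}" and pos: "\<And>y. y \<in> X \<Longrightarrow> 0 < d y"
    and closed: "\<And>y. y \<in> X \<Longrightarrow> succs D y (\<pi> y) \<subseteq> X"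
    by blast
  have "fail \<notin> X" using live pos pmdp_enabled_targets[OF pm] by blast
  have "(St y, SA y (\<pi> y)) \<in> edges D fail" if "y \<in> X" for y
  proof -
    have "\<pi> y \<in> enabled D y" using live pos v_step that by blast
    then obtain z where "z \<in> succs D y (\<pi> y)" unfolding enabled_iff_succs_nonempty by blast
    then show ?thesis using closed[OF that] \<open>fail \<notin> X\<close> unfolding succs_def by auto
  qed
  moreover have "finite X" using X(1) pm unfolding pmdp_def by (auto intro: finite_subset)
  ultimately obtain P B where "end_component S D fail P B" "P \<noteq> {}"
    using end_component_of_closed_memoryless[OF _ X(2,1)] closed by metis
  then show False using no_ec by blast
qed

section \<open>Removing state-action pairs\<close>

definition action_restriction :: "('s \<times> 'a \<times> 's) set \<Rightarrow> ('s \<times> 'a \<times> 's) set \<Rightarrow> bool" where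
  "action_restriction D' D \<longleftrightarrow> (\<forall>x b. succs D' x b = {} \<or> succs D' x b = succs D x b)"

lemma action_restriction_enabled:
  assumes "action_restriction D' D" "b \<in> enabled D' x"
  shows "b \<in> enabled D x" "succs D' x b = succs D x b"
  using assms unfolding action_restriction_def enabled_iff_succs_nonempty by metis+

lemma action_restriction_subset:
  assumes "action_restriction D' D"
  shows "D' \<subseteq> D"
proof clarify
  fix x b y assume "(x, b, y) \<in> D'"
  then have "b \<in> enabled D' x" "y \<in> succs D' x b" unfolding enabled_def succs_def by auto
  then show "(x, b, y) \<in> D" using action_restriction_enabled(2)[OF assms] unfolding succs_def by blast
qed

lemma graph_preserving_action_restriction:
  assumes "action_restriction D' D" "graph_preserving D val"
  shows "graph_preserving D' val"
  using assms unfolding action_restriction_def graph_preserving_def by metis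

lemma strategy_action_restriction:
  fixes D D' :: "('s \<times> 'a \<times> 's) set"
  assumes restr: "action_restriction D' D" and \<sigma>: "strategy D' \<sigma>"
    and fin_en: "\<And>x. finite (enabled D x)" and live: "\<And>x. enabled D x \<noteq> {} \<Longrightarrow> enabled D' x \<noteq> {}"
  shows "strategy D \<sigma>"
  unfolding strategy_def
proof (intro conjI allI impI)
  fix h :: "'s list" and b assume "h \<noteq> []"
  then show "0 \<le> \<sigma> h b" using \<sigma> unfolding strategy_def by blast
  assume "\<sigma> h b \<noteq> 0"
  then show "b \<in> enabled D (last h)"
    using \<sigma> \<open>h \<noteq> []\<close> action_restriction_enabled(1)[OF restr] unfolding strategy_def by blast
next
  fix h :: "'s list" assume "h \<noteq> []" "enabled D (last h) \<noteq> {}"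
  have "(\<Sum>b\<in>enabled D (last h). \<sigma> h b) = (\<Sum>b\<in>enabled D' (last h). \<sigma> h b)"
    using \<sigma> \<open>h \<noteq> []\<close> action_restriction_enabled(1)[OF restr] unfolding strategy_def
    by (intro sum.mono_neutral_right fin_en) auto
  also have "\<dots> = 1" using \<sigma> \<open>h \<noteq> []\<close> live[OF \<open>enabled D (last h) \<noteq> {}\<close>] unfolding strategy_def by blast
  finally show "(\<Sum>b\<in>enabled D (last h). \<sigma> h b) = 1" .
qed

lemma reach_within_action_restriction:
  assumes restr: "action_restriction D' D" and \<sigma>: "strategy D' \<sigma>"
    and fin_en: "\<And>x. finite (enabled D x)" and "h \<noteq> []"
  shows "reach_within D' val \<sigma> fin h n = reach_within D val \<sigma> fin h n"
  using \<open>h \<noteq> []\<close>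
proof (induction n arbitrary: h)
  case (Suc n)
  let ?x = "last h"
  have IH: "reach_within D' val \<sigma> fin (h @ [y]) n = reach_within D val \<sigma> fin (h @ [y]) n" for y
    using Suc.IH[of "h @ [y]"] by simp
  have "(\<Sum>b\<in>enabled D' ?x. \<sigma> h b *
        (\<Sum>y\<in>succs D' ?x b. val ?x b y * reach_within D' val \<sigma> fin (h @ [y]) n))
      = (\<Sum>b\<in>enabled D ?x. \<sigma> h b *
        (\<Sum>y\<in>succs D ?x b. val ?x b y * reach_within D val \<sigma> fin (h @ [y]) n))"
    using \<sigma> Suc.prems action_restriction_enabled[OF restr] unfolding strategy_def IH
    by (intro sum.mono_neutral_cong_left fin_en) auto
  then show ?case unfolding reach_within.simps(2)[of _ _ _ _ h] by (simp del: reach_within.simps)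
qed simp

lemma max_rew_action_restriction_le:
  assumes restr: "action_restriction D' D" and fin_en: "\<And>x. finite (enabled D x)"
    and live: "\<And>x. enabled D x \<noteq> {} \<Longrightarrow> enabled D' x \<noteq> {}" and val: "graph_preserving D val"
  shows "max_rew D' val fin x \<le> max_rew D val fin x"
  unfolding max_rew_def[of D']
proof (rule cSUP_least)
  have "finite (enabled D' y)" for y
    using fin_en action_restriction_enabled(1)[OF restr] by (meson finite_subset subsetI)
  then show "{\<sigma>. strategy D' \<sigma>} \<noteq> {}" using strategy_exists by blast
next
  fix \<sigma> assume "\<sigma> \<in> {\<sigma>. strategy D' \<sigma>}"
  then have \<sigma>: "strategy D' \<sigma>" by simp
  have "reach_prob D' val \<sigma> fin x = reach_prob D val \<sigma> fin x"
    unfolding reach_prob_def using reach_within_action_restriction[OF restr \<sigma> fin_en] by simp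
  also have "\<dots> \<le> max_rew D val fin x"
    using strategy_action_restriction[OF restr \<sigma> fin_en live] val by (rule reach_prob_le_max_rew)
  finally show "reach_prob D' val \<sigma> fin x \<le> max_rew D val fin x" .
qed

lemma end_component_action_restriction:
  assumes restr: "action_restriction D' D" and ec: "end_component S D' fail P B"
  shows "end_component S D fail P B"
proof -
  have E: "edges D' fail \<subseteq> edges D fail"
    using action_restriction_subset[OF restr] unfolding edges_def by blast
  have "succs D p b = succs D' p b" if "(p, b) \<in> B" for p b
    using ec that action_restriction_enabled(2)[OF restr] unfolding end_component_def sub_mdp_def
    by (fastforce simp: enabled_def)
  then have "sub_mdp S D fail P B"
    using ec E unfolding end_component_def sub_mdp_def by fast
  moreover have "(edges D' fail \<inter> V \<times> V)\<^sup>* \<subseteq> (edges D fail \<inter> V \<times> V)\<^sup>*" for V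
    using E by (intro rtrancl_mono) blast
  ultimately show ?thesis using ec unfolding end_component_def by blast
qed

lemma max_rew_le_action_restriction:
  assumes pm: "pmdp S A D fin fail" and restr: "action_restriction D' D"
    and no_ec: "\<And>P B. end_component S D fail P B \<Longrightarrow> P = {}"
    and val: "graph_preserving D val"
    and opt: "\<And>y. enabled D y \<noteq> {} \<Longrightarrow>
      \<exists>b\<in>enabled D' y. \<forall>c\<in>enabled D y. rew_v D val fin (SA y c) \<le> rew_v D val fin (SA y b)"
    and "x \<in> S"
  shows "max_rew D val fin x \<le> max_rew D' val fin x"
proof -
  let ?v = "max_rew D val fin"
  obtain \<pi> where \<pi>: "\<And>y. enabled D y \<noteq> {} \<Longrightarrow> \<pi> y \<in> enabled D' y \<and>
      (\<forall>c\<in>enabled D y. rew_v D val fin (SA y c) \<le> rew_v D val fin (SA y (\<pi> y)))"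
    using opt by metis
  have pm': "pmdp S A D' fin fail" using pm action_restriction_subset[OF restr] by (rule pmdp_subset)
  have fin_en: "\<And>y. finite (enabled D y)" using pm by (rule pmdp_finite_enabled)
  have val': "graph_preserving D' val" using restr val by (rule graph_preserving_action_restriction)
  have live: "enabled D y \<noteq> {} \<longleftrightarrow> enabled D' y \<noteq> {}" for y
    using \<pi> action_restriction_enabled(1)[OF restr] by blast
  have "?v x \<le> reach_prob D' val (memoryless D' \<pi>) fin x"
  proof (rule le_reach_prob_memoryless[OF pm' _ val'])
    show "P = {}" if "end_component S D' fail P B" for P B
      using no_ec end_component_action_restriction[OF restr that] by blast
    show "?v fin \<le> 1" using fin_en val by (rule max_rew_le_one)
    show "?v y \<le> 0" if "y \<noteq> fin" "enabled D' y = {}" for y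
      using fin_en val that(1) by (rule max_rew_le_if_actions_le) (use that(2) live in auto)
    fix y assume "y \<noteq> fin" "enabled D' y \<noteq> {}"
    then have "enabled D y \<noteq> {}" using live by blast
    note \<pi>_y = \<pi>[OF this]
    have "0 \<le> rew_v D val fin (SA y (\<pi> y))"
      using max_rew_nonneg[OF fin_en val] graph_preserving_weights(1)[OF val]
        action_restriction_enabled(1)[OF restr] \<pi>_y
      by (auto intro!: sum_nonneg)
    with fin_en val \<open>y \<noteq> fin\<close> have "?v y \<le> rew_v D val fin (SA y (\<pi> y))"
      by (rule max_rew_le_if_actions_le) (use \<pi>_y in blast)
    then show "\<pi> y \<in> enabled D' y \<and> ?v y \<le> (\<Sum>z\<in>succs D' y (\<pi> y). val y (\<pi> y) z * ?v z)"
      using \<pi>_y action_restriction_enabled(2)[OF restr] by simp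
  qed fact
  also have "\<dots> \<le> max_rew D' val fin x"
  proof (rule reach_prob_le_max_rew[OF _ val'])
    show "strategy D' (memoryless D' \<pi>)"
      by (rule strategy_memoryless[OF pmdp_finite_enabled[OF pm']]) (use \<pi> live in blast)
  qed
  finally show ?thesis .
qed

lemma succs_remove_pair:
  assumes "pmdp S A D fin fail"
  shows "succs (D - {(s, a, s') | s'. s' \<in> S}) x b = (if (x, b) = (s, a) then {} else succs D x b)"
  using assms unfolding pmdp_def succs_def by auto

lemma vsucc_St: "vsucc D fail (St s) = {SA s b | b. \<exists>s'. (s, b, s') \<in> D \<and> s' \<noteq> fail}"
  unfolding vsucc_def edges_def by auto

lemma dominated_by_other_action:
  assumes "dominated D fin (SA s a) (vsucc D fail (St s) - {SA s a})" "graph_preserving D val"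
  obtains b where "b \<in> enabled D s" "b \<noteq> a" "rew_v D val fin (SA s a) \<le> rew_v D val fin (SA s b)"
proof -
  obtain w where "w \<in> vsucc D fail (St s) - {SA s a}" "rew_v D val fin (SA s a) \<le> rew_v D val fin w"
    using assms unfolding dominated_def by blast
  then show ?thesis using that unfolding vsucc_St enabled_def by blast
qed

lemma exists_max_outside_dominated:
  fixes f :: "'b \<Rightarrow> real"
  assumes "finite E" "E \<noteq> {}" and dom: "\<And>r. r \<in> R \<Longrightarrow> \<exists>b\<in>E - R. f r \<le> f b"
  shows "\<exists>b\<in>E - R. \<forall>c\<in>E. f c \<le> f b"
proof -
  have "Max (f ` E) \<in> f ` E" using assms(1,2) by simp
  then obtain b where "b \<in> E" "f b = Max (f ` E)" by (metis imageE)
  then have max: "\<forall>c\<in>E. f c \<le> f b" using assms(1) by simp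
  show ?thesis
  proof (cases "b \<in> R")
    case True
    then obtain b' where "b' \<in> E - R" "f b \<le> f b'" using dom by blast
    then have "\<forall>c\<in>E. f c \<le> f b'" using max by force
    then show ?thesis using \<open>b' \<in> E - R\<close> by blast
  qed (use \<open>b \<in> E\<close> max in blast)
qed

theorem theorem6:
  fixes S :: "'s set" and A :: "'a set" and \<Delta> :: "('s \<times> 'a \<times> 's) set"
    and fin fail :: 's and val :: "'s \<Rightarrow> 'a \<Rightarrow> 's \<Rightarrow> real" and s :: 's and a :: 'a
  assumes "pmdp S A \<Delta> fin fail"
    and "iso_to_mec_quotient S A \<Delta> fin fail"
    and "graph_preserving \<Delta> val"
    and "s \<in> S" and "a \<in> A"
    and "dominated \<Delta> fin (SA s a) (vsucc \<Delta> fail (St s) - {SA s a})"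
  shows "max_rew \<Delta> val fin s = max_rew (\<Delta> - {(s, a, s') | s'. s' \<in> S}) val fin s"
proof -
  let ?N = "\<Delta> - {(s, a, s') | s'. s' \<in> S}"
  note succs_N = succs_remove_pair[where s = s and a = a, OF assms(1)]
  have restr: "action_restriction ?N \<Delta>"
    unfolding action_restriction_def succs_N by simp
  have enabled_N: "enabled ?N x = enabled \<Delta> x - {b. (x, b) = (s, a)}" for x
    unfolding set_eq_iff by (auto simp: enabled_iff_succs_nonempty succs_N)
  have fin_en: "\<And>x. finite (enabled \<Delta> x)" using assms(1) by (rule pmdp_finite_enabled)
  obtain b0 where b0: "b0 \<in> enabled \<Delta> s" "b0 \<noteq> a"
    "rew_v \<Delta> val fin (SA s a) \<le> rew_v \<Delta> val fin (SA s b0)"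
    using assms(6,3) by (rule dominated_by_other_action)
  have opt: "\<exists>b\<in>enabled ?N x. \<forall>c\<in>enabled \<Delta> x. rew_v \<Delta> val fin (SA x c) \<le> rew_v \<Delta> val fin (SA x b)"
    if "enabled \<Delta> x \<noteq> {}" for x
    unfolding enabled_N by (rule exists_max_outside_dominated[OF fin_en that]) (use b0 in auto)
  have "max_rew ?N val fin s \<le> max_rew \<Delta> val fin s"
    by (rule max_rew_action_restriction_le[OF restr fin_en _ assms(3)]) (use opt in blast)
  moreover have "max_rew \<Delta> val fin s \<le> max_rew ?N val fin s"
    using assms(1) restr no_end_component_if_iso[OF assms(1,2)] assms(3) opt assms(4)
    by (rule max_rew_le_action_restriction)
  ultimately show ?thesis by simp
qed

end
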